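(* Let $d\ge1$, $\beta>0$, $\theta:[0,\infty)\to[0,\infty)$ continuous with $\theta(x)>0$ for $x>0$ and $h_\pm<\infty$; $\mu>0$ for bosons, $\mu\in\mathbb{R}$ for fermions. Let $\vec K^L\sim\mathcal{P}^L_\pm$ independently over $L$. There exists a constant $c=c(\theta)$ such that almost surely $$\limsup_{L\to\infty}\max_{\vec u\in B_{\vec1}(L)}\frac{R^L_{\vec u}(\vec K^L)}{(\log L)^{1/d}}\le c.$$
   Context: Put $q_{\vec n}^L=e^{-\beta(\theta(\|\vec n\|/L)+\mu)}$. Bosons: under $\mathcal{P}^L_+$ the $K_{\vec n}$, $\vec n\in\mathbb{Z}^d$, are independent with $\mathbb{P}(K_{\vec n}=k)=(1-q^L_{\vec n})(q^L_{\vec n})^k$, $k\ge0$. Fermions: independent $\{0,1\}$-valued with $\mathbb{P}(K_{\vec n}=1)=q^L_{\vec n}/(1+q^L_{\vec n})$. $h_\pm=\int_{\mathbb{R}^d}\big(\mp\log(1\mp e^{-\beta(\theta(\|\vec y\|)+\mu)})+\beta(\theta(\|\vec y\|)+\mu)\frac{e^{-\beta(\theta(\|\vec y\|)+\mu)}}{1\mp e^{-\beta(\theta(\|\vec y\|)+\mu)}}\big)d\vec y$. $B_{\vec u}(s)=\{\vec n\in\mathbb{Z}^d:u_i\le n_i\le u_i+s-1\ \forall i\}$, $\vec k_{\vec u}(s)=(k_{\vec n})_{\vec n\in B_{\vec u}(s)}$, $R^L_{\vec u}(\vec k)=\inf\{s\ge1:\vec k_{\vec u}(s)\ne\vec k_{\vec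 v}(s)\ \forall\vec v\ne\vec u,\ \vec v\in B_{\vec1}(L)\}$. *)

theory Defs
  imports "HOL-Probability.Probability"
begin

text \<open>Lattice points of Z^d are functions 'd \<Rightarrow> int for a finite index type 'd (d = CARD('d)).\<close>

definition lnorm :: "('d::finite \<Rightarrow> int) \<Rightarrow> real" where
  "lnorm n = sqrt (\<Sum>i\<in>UNIV. (real_of_int (n i))^2)"

definition qL :: "real \<Rightarrow> (real \<Rightarrow> real) \<Rightarrow> real \<Rightarrow> nat \<Rightarrow> ('d::finite \<Rightarrow> int) \<Rightarrow> real" where
  "qL \<beta> \<theta> \<mu> L n = exp (- \<beta> * (\<theta> (lnorm n / real L) + \<mu>))"

text \<open>Integrand of h_+ (boson = True) resp. h_- (boson = False).\<close>
definition hint :: "bool \<Rightarrow> real \<Rightarrow> (real \<Rightarrow> real) \<Rightarrow> real \<Rightarrow> real^'d \<Rightarrow> real" where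
  "hint boson \<beta> \<theta> \<mu> y =
     (let a = \<beta> * (\<theta> (norm y) + \<mu>); e = exp (- a) in
      if boson then - ln (1 - e) + a * e / (1 - e)
      else ln (1 + e) + a * e / (1 + e))"

definition box :: "('d::finite \<Rightarrow> int) \<Rightarrow> nat \<Rightarrow> ('d \<Rightarrow> int) set" where
  "box u s = {n. \<forall>i. u i \<le> n i \<and> n i \<le> u i + int s - 1}"

definition same_pattern :: "(('d::finite \<Rightarrow> int) \<Rightarrow> nat) \<Rightarrow> ('d \<Rightarrow> int) \<Rightarrow> ('d \<Rightarrow> int) \<Rightarrow> nat \<Rightarrow> bool" where
  "same_pattern k u v s =
     (\<forall>j. (\<forall>i. 0 \<le> j i \<and> j i \<le> int s - 1) \<longrightarrow> k (\<lambda>i. u i + j i) = k (\<lambda>i. v i + j i))"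

definition Rdist :: "nat \<Rightarrow> ('d::finite \<Rightarrow> int) \<Rightarrow> (('d \<Rightarrow> int) \<Rightarrow> nat) \<Rightarrow> ereal" where
  "Rdist L u k =
     (let S = {s::nat. s \<ge> 1 \<and> (\<forall>v\<in>box (\<lambda>_. 1) L. v \<noteq> u \<longrightarrow> \<not> same_pattern k u v s)}
      in if S = {} then \<infinity> else ereal (real (LEAST s. s \<in> S)))"

end

theory Submission
  imports Defs "HOL-Real_Asymp.Real_Asymp"
begin

(*
  Since \<theta> is bounded on compacts, every site within distance O(L) of the box B_1(L) is empty
  with probability in [\<delta>, 1 - \<delta>], uniformly in L. For u \<noteq> v there is a set J of at least
  s^d/2 offsets in B_0(s) whose translates u + J and v + J are disjoint, so by independence the
  patterns of side s at u and at v agree with probability at most (1 - \<delta>)^(s^d/2). For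
  s = \<lceil>C (log L)^(1/d)\<rceil> with C large this is at most L^(-2d-2); a union bound over the
  L^(2d) pairs and Borel-Cantelli show that almost surely, for all large L, no two patterns of
  side s in B_1(L) coincide, hence R^L_u \<le> s for all u.
*)

lemma pred_eq_countable [measurable (raw)]:
  fixes f g :: "'a \<Rightarrow> 'b::countable"
  assumes "f \<in> measurable M (count_space UNIV)" "g \<in> measurable M (count_space UNIV)"
  shows "Measurable.pred M (\<lambda>x. f x = g x)"
  using measurable_compose_countable[where f="\<lambda>m x. m = g x", OF _ assms(1)] assms(2)
  by measurable

lemma (in prob_space) indep_sets_reindex:
  assumes F: "indep_sets F I" and f: "inj_on f J" "f ` J \<subseteq> I"
  shows "indep_sets (\<lambda>j. F (f j)) J"
proof (rule indep_setsI)
  show "F (f j) \<subseteq> events" if "j \<in> J" for j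
    using F f(2) that unfolding indep_sets_def by auto
next
  fix A K assume K: "K \<noteq> {}" "K \<subseteq> J" "finite K" and A: "\<forall>j\<in>K. A j \<in> F (f j)"
  define g where "g = the_inv_into K f"
  have fK: "inj_on f K" using f(1) K(2) by (rule inj_on_subset)
  have gf: "g (f j) = j" if "j \<in> K" for j
    unfolding g_def using fK that by (rule the_inv_into_f_f)
  have "prob (\<Inter>i\<in>f ` K. A (g i)) = (\<Prod>i\<in>f ` K. prob (A (g i)))"
    using K A f(2) gf by (intro indep_setsD[OF F]) auto
  then show "prob (\<Inter>j\<in>K. A j) = (\<Prod>j\<in>K. prob (A j))"
    using gf by (simp add: prod.reindex[OF fK] image_image cong: INF_cong)
qed

lemma (in prob_space) indep_vars_reindex:
  assumes "indep_vars M' X I" "inj_on f J" "f ` J \<subseteq> I"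
  shows "indep_vars (\<lambda>j. M' (f j)) (\<lambda>j. X (f j)) J"
  using assms indep_sets_reindex[of "\<lambda>i. sigma_sets (space M) {X i -` A \<inter> space M | A. A \<in> sets (M' i)}"]
  unfolding indep_vars_def by blast

lemma (in prob_space) prob_indep_vars_forall:
  assumes X: "indep_vars M' X I" and J: "finite J" "J \<subseteq> I" and A: "\<And>j. j \<in> J \<Longrightarrow> A j \<in> sets (M' j)"
  shows "prob {\<omega>\<in>space M. \<forall>j\<in>J. X j \<omega> \<in> A j} = (\<Prod>j\<in>J. prob {\<omega>\<in>space M. X j \<omega> \<in> A j})"
proof (cases "J = {}")
  case True
  then show ?thesis by (simp add: prob_space)
next
  case False
  have "{\<omega>\<in>space M. \<forall>j\<in>J. X j \<omega> \<in> A j} = (\<Inter>j\<in>J. X j -` A j \<inter> space M)"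
    using False by auto
  moreover have "X j -` A j \<inter> space M = {\<omega>\<in>space M. X j \<omega> \<in> A j}" for j
    by auto
  ultimately show ?thesis
    using indep_varsD[OF X False J(1,2) A] by simp
qed

lemma (in prob_space) indep_vars_pairs:
  fixes X :: "'i \<Rightarrow> 'a \<Rightarrow> 'b::countable" and P :: "'b \<Rightarrow> 'b \<Rightarrow> bool"
  assumes X: "indep_vars (\<lambda>_. count_space UNIV) X I"
    and xy: "x ` J \<subseteq> I" "y ` J \<subseteq> I" "disjoint_family_on (\<lambda>j. {x j, y j}) J"
  shows "indep_vars (\<lambda>_. count_space UNIV) (\<lambda>j \<omega>. P (X (x j) \<omega>) (X (y j) \<omega>)) J"
proof -
  have "indep_vars (\<lambda>j. PiM {x j, y j} (\<lambda>_. count_space UNIV))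
      (\<lambda>j \<omega>. restrict (\<lambda>i. X i \<omega>) {x j, y j}) J"
    using xy by (intro indep_vars_restrict[OF X]) auto
  then have "indep_vars (\<lambda>_. count_space UNIV)
      (\<lambda>j \<omega>. (\<lambda>f. P (f (x j)) (f (y j))) (restrict (\<lambda>i. X i \<omega>) {x j, y j})) J"
    by (rule indep_vars_compose2) measurable
  then show ?thesis by simp
qed

lemma (in prob_space) prob_both_or_neither:
  fixes X :: "'i \<Rightarrow> 'a \<Rightarrow> 'b" and A :: "'b set"
  assumes X: "indep_vars (\<lambda>_. count_space UNIV) X I" and ab: "a \<in> I" "b \<in> I" "a \<noteq> b"
  defines "p c \<equiv> prob {\<omega>\<in>space M. X c \<omega> \<in> A}"
  shows "prob {\<omega>\<in>space M. (X a \<omega> \<in> A) = (X b \<omega> \<in> A)} = p a * p b + (1 - p a) * (1 - p b)"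
proof -
  have event: "{\<omega>\<in>space M. X c \<omega> \<in> B} \<in> events" if "c \<in> I" for c B
  proof -
    have "X c \<in> measurable M (count_space UNIV)"
      using X that unfolding indep_vars_def by auto
    then have "X c -` B \<inter> space M \<in> events" by (rule measurable_sets) simp
    then show ?thesis by (simp only: vimage_def Int_def) (simp add: conj_commute)
  qed
  have event_both: "{\<omega>\<in>space M. X a \<omega> \<in> B \<and> X b \<omega> \<in> B} \<in> events" for B
  proof -
    have "{\<omega>\<in>space M. X a \<omega> \<in> B \<and> X b \<omega> \<in> B} = {\<omega>\<in>space M. X a \<omega> \<in> B} \<inter> {\<omega>\<in>space M. X b \<omega> \<in> B}"
      by auto
    then show ?thesis using event ab by auto
  qed
  have both: "prob {\<omega>\<in>space M. X a \<omega> \<in> B \<and> X b \<omega> \<in> B}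
      = prob {\<omega>\<in>space M. X a \<omega> \<in> B} * prob {\<omega>\<in>space M. X b \<omega> \<in> B}" for B
    using prob_indep_vars_forall[OF X, of "{a, b}" "\<lambda>_. B"] ab by simp
  have compl: "prob {\<omega>\<in>space M. X c \<omega> \<in> - A} = 1 - p c" if "c \<in> I" for c
  proof -
    have "{\<omega>\<in>space M. X c \<omega> \<in> - A} = space M - {\<omega>\<in>space M. X c \<omega> \<in> A}" by auto
    then show ?thesis
      unfolding p_def using event[OF that] by (simp add: prob_compl)
  qed
  have "{\<omega>\<in>space M. (X a \<omega> \<in> A) = (X b \<omega> \<in> A)} =
      {\<omega>\<in>space M. X a \<omega> \<in> A \<and> X b \<omega> \<in> A} \<union> {\<omega>\<in>space M. X a \<omega> \<in> - A \<and> X b \<omega> \<in> - A}"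
    by auto
  moreover have "prob ({\<omega>\<in>space M. X a \<omega> \<in> A \<and> X b \<omega> \<in> A} \<union> {\<omega>\<in>space M. X a \<omega> \<in> - A \<and> X b \<omega> \<in> - A})
      = prob {\<omega>\<in>space M. X a \<omega> \<in> A \<and> X b \<omega> \<in> A} + prob {\<omega>\<in>space M. X a \<omega> \<in> - A \<and> X b \<omega> \<in> - A}"
    by (intro finite_measure_Union event_both) auto
  ultimately show ?thesis
    using both[of A] both[of "- A"] compl ab by (simp add: p_def)
qed

lemma agreement_prob_le:
  fixes a b \<delta> :: real
  assumes "0 \<le> \<delta>" "\<delta> \<le> a" "a \<le> 1 - \<delta>" "\<delta> \<le> b" "b \<le> 1 - \<delta>"
  shows "a * b + (1 - a) * (1 - b) \<le> 1 - \<delta>"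
proof -
  have "a * b \<le> (1 - \<delta>) * b" "(1 - a) * (1 - b) \<le> (1 - \<delta>) * (1 - b)"
    using assms by (intro mult_right_mono; simp)+
  then show ?thesis by (simp add: algebra_simps)
qed

lemma (in prob_space) prob_agree_on_pairs_le:
  fixes X :: "'i \<Rightarrow> 'a \<Rightarrow> 'b::countable"
  assumes X: "indep_vars (\<lambda>_. count_space UNIV) X I"
    and J: "finite J" "x ` J \<subseteq> I" "y ` J \<subseteq> I" "disjoint_family_on (\<lambda>j. {x j, y j}) J"
      "\<And>j. j \<in> J \<Longrightarrow> x j \<noteq> y j"
    and p: "0 \<le> \<delta>" "\<And>c. c \<in> x ` J \<union> y ` J \<Longrightarrow>
      \<delta> \<le> prob {\<omega>\<in>space M. X c \<omega> \<in> A} \<and> prob {\<omega>\<in>space M. X c \<omega> \<in> A} \<le> 1 - \<delta>"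
  shows "prob {\<omega>\<in>space M. \<forall>j\<in>J. (X (x j) \<omega> \<in> A) = (X (y j) \<omega> \<in> A)} \<le> (1 - \<delta>) ^ card J"
proof -
  have "prob {\<omega>\<in>space M. \<forall>j\<in>J. (X (x j) \<omega> \<in> A) = (X (y j) \<omega> \<in> A)}
      = (\<Prod>j\<in>J. prob {\<omega>\<in>space M. (X (x j) \<omega> \<in> A) = (X (y j) \<omega> \<in> A)})"
    using prob_indep_vars_forall[OF indep_vars_pairs[OF X J(2-4)], of J "\<lambda>_. {True}"] J(1)
    by simp
  also have "\<dots> \<le> (\<Prod>j\<in>J. 1 - \<delta>)"
  proof (rule prod_mono)
    fix j assume j: "j \<in> J"
    then have "x j \<in> I" "y j \<in> I" using J(2,3) by auto
    then show "0 \<le> prob {\<omega>\<in>space M. (X (x j) \<omega> \<in> A) = (X (y j) \<omega> \<in> A)} \<and>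
        prob {\<omega>\<in>space M. (X (x j) \<omega> \<in> A) = (X (y j) \<omega> \<in> A)} \<le> 1 - \<delta>"
      using prob_both_or_neither[OF X _ _ J(5)[OF j]] p j by (simp add: agreement_prob_le)
  qed
  finally show ?thesis by simp
qed

lemma box_eq_PiE: "box u s = PiE UNIV (\<lambda>i. {u i..u i + int s - 1})"
  unfolding box_def PiE_UNIV_domain Pi_def by auto

lemma finite_box: "finite (box u s)"
  unfolding box_eq_PiE by (intro finite_PiE) auto

lemma card_box: "card (box u s :: ('d::finite \<Rightarrow> int) set) = s ^ CARD('d)"
  unfolding box_eq_PiE by (simp add: card_PiE)

lemma same_pattern_iff_box:
  "same_pattern k u v s \<longleftrightarrow> (\<forall>j\<in>box (\<lambda>_. 0) s. k (\<lambda>i. u i + j i) = k (\<lambda>i. v i + j i))"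
  unfolding same_pattern_def box_def by simp

lemma card_residues_lower_half:
  fixes t :: int and s :: nat
  assumes t: "t > 0"
  shows "real s \<le> 2 * real (card {a\<in>{0..int s - 1}. a mod (2 * t) < t})"
proof -
  define A where "A = {a\<in>{0..int s - 1}. a mod (2 * t) < t}"
  define B where "B = {a\<in>{0..int s - 1}. \<not> a mod (2 * t) < t}"
  have fin: "finite A" "finite B" unfolding A_def B_def by (rule finite_subset[of _ "{0..int s - 1}"]; auto)+
  have "A \<union> B = {0..int s - 1}" "A \<inter> B = {}" unfolding A_def B_def by auto
  then have "card A + card B = s"
    using card_Un_disjoint[OF fin] by simp
  moreover have "card B \<le> card A"
  proof (rule card_inj_on_le[OF _ _ fin(1)])
    show "inj_on (\<lambda>a. a - t) B" by (simp add: inj_on_def)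
    show "(\<lambda>a. a - t) ` B \<subseteq> A"
    proof
      fix z assume "z \<in> (\<lambda>a. a - t) ` B"
      then obtain a where a: "a \<in> B" "z = a - t" by auto
      have r: "t \<le> a mod (2 * t)" "a mod (2 * t) < 2 * t" "a mod (2 * t) \<le> a" "a \<le> int s - 1"
        using a(1) t unfolding B_def by (auto simp: zmod_le_nonneg_dividend)
      have "(a - t) mod (2 * t) = (a mod (2 * t) - t) mod (2 * t)"
        by (rule mod_diff_left_eq[symmetric])
      also have "\<dots> = a mod (2 * t) - t"
        using r by (intro mod_pos_pos_trivial) auto
      finally show "z \<in> A" using a(2) r unfolding A_def by auto
    qed
  qed
  ultimately show ?thesis unfolding A_def by linarith
qed

lemma mod_add_half_period:
  fixes a t :: int
  assumes "t > 0" "a mod (2 * t) < t"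
  shows "\<not> (a + t) mod (2 * t) < t"
proof -
  have "(a + t) mod (2 * t) = (a mod (2 * t) + t) mod (2 * t)"
    by (rule mod_add_left_eq[symmetric])
  also have "\<dots> = a mod (2 * t) + t"
    using assms by (intro mod_pos_pos_trivial) auto
  moreover have "0 \<le> a mod (2 * t)" using assms(1) by simp
  ultimately show ?thesis by linarith
qed

lemma disjoint_translates_subset:
  fixes u v :: "'d::finite \<Rightarrow> int"
  assumes "u \<noteq> v"
  obtains J where "J \<subseteq> box (\<lambda>_. 0) s"
    and "\<And>j j'. j \<in> J \<Longrightarrow> j' \<in> J \<Longrightarrow> (\<lambda>i. u i + j i) \<noteq> (\<lambda>i. v i + j' i)"
    and "real s ^ CARD('d) \<le> 2 * real (card J)"
proof -
  obtain i0 where i0: "u i0 \<noteq> v i0" using assms by auto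
  define t where "t = \<bar>v i0 - u i0\<bar>"
  have t: "t > 0" using i0 unfolding t_def by auto
  (* Keep the offsets whose i0-coordinate lies in the lower half of its residue class modulo 2t:
     two such coordinates never differ by exactly t. *)
  define S where "S i = (if i = i0 then {a\<in>{0..int s - 1}. a mod (2 * t) < t} else {0..int s - 1})" for i
  define J where "J = PiE UNIV S"
  have "J \<subseteq> box (\<lambda>_. 0) s"
    unfolding J_def box_eq_PiE S_def by (intro PiE_mono) auto
  moreover have "(\<lambda>i. u i + j i) \<noteq> (\<lambda>i. v i + j' i)" if "j \<in> J" "j' \<in> J" for j j'
  proof
    assume "(\<lambda>i. u i + j i) = (\<lambda>i. v i + j' i)"
    then have "u i0 + j i0 = v i0 + j' i0" by metis
    then have "j i0 = j' i0 + t \<or> j' i0 = j i0 + t" unfolding t_def by auto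
    moreover have "j i0 mod (2 * t) < t" "j' i0 mod (2 * t) < t"
      using that unfolding J_def by (auto dest!: PiE_mem[where x = i0] simp: S_def)
    ultimately show False using mod_add_half_period[OF t] by auto
  qed
  moreover have "real s ^ CARD('d) \<le> 2 * real (card J)"
  proof -
    have "card J = card (S i0) * (\<Prod>i\<in>UNIV - {i0}. card (S i))"
      unfolding J_def by (simp add: card_PiE prod.remove)
    also have "(\<Prod>i\<in>UNIV - {i0}. card (S i)) = s ^ (CARD('d) - 1)"
      by (simp add: S_def card_Diff_singleton)
    finally have "real (card J) = real (card (S i0)) * real s ^ (CARD('d) - 1)" by simp
    moreover have "real s \<le> 2 * real (card (S i0))"
      using card_residues_lower_half[OF t, of s] by (simp add: S_def)
    moreover have "real s ^ CARD('d) = real s * real s ^ (CARD('d) - 1)"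
      by (simp add: power_eq_if)
    ultimately show ?thesis
      by (simp add: mult.assoc[symmetric] mult_right_mono)
  qed
  ultimately show thesis using that by blast
qed

definition pattern_repeats :: "nat \<Rightarrow> nat \<Rightarrow> (('d::finite \<Rightarrow> int) \<Rightarrow> nat) \<Rightarrow> bool" where
  "pattern_repeats L s k \<longleftrightarrow>
     (\<exists>u\<in>box (\<lambda>_. 1) L. \<exists>v\<in>box (\<lambda>_. 1) L. u \<noteq> v \<and> same_pattern k u v s)"

lemma Rdist_le_if_not_pattern_repeats:
  assumes "1 \<le> s" "\<not> pattern_repeats L s k" "u \<in> box (\<lambda>_. 1) L"
  shows "Rdist L u k \<le> ereal (real s)"
proof -
  define S where "S = {s::nat. s \<ge> 1 \<and> (\<forall>v\<in>box (\<lambda>_. 1) L. v \<noteq> u \<longrightarrow> \<not> same_pattern k u v s)}"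
  have "s \<in> S" using assms unfolding S_def pattern_repeats_def by auto
  then have "S \<noteq> {}" "(LEAST s. s \<in> S) \<le> s" by (auto intro: Least_le)
  then show ?thesis unfolding Rdist_def Let_def S_def[symmetric] by auto
qed

lemma (in prob_space) pattern_repeats_event:
  fixes Y :: "('d::finite \<Rightarrow> int) \<Rightarrow> 'a \<Rightarrow> nat"
  assumes [measurable]: "\<And>n. Y n \<in> measurable M (count_space UNIV)"
  shows "{\<omega>\<in>space M. pattern_repeats L s (\<lambda>n. Y n \<omega>)} \<in> events"
  unfolding pattern_repeats_def same_pattern_iff_box using finite_box by measurable

lemma (in prob_space) prob_same_pattern_le:
  fixes Y :: "('d::finite \<Rightarrow> int) \<Rightarrow> 'a \<Rightarrow> nat"
  assumes Y: "indep_vars (\<lambda>_. count_space UNIV) Y UNIV" and uv: "u \<noteq> v"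
    and \<delta>: "0 \<le> \<delta>" "\<delta> < 1"
    and p: "\<And>w j. w \<in> {u, v} \<Longrightarrow> j \<in> box (\<lambda>_. 0) s \<Longrightarrow>
      \<delta> \<le> prob {\<omega>\<in>space M. Y (\<lambda>i. w i + j i) \<omega> = 0} \<and>
      prob {\<omega>\<in>space M. Y (\<lambda>i. w i + j i) \<omega> = 0} \<le> 1 - \<delta>"
  shows "prob {\<omega>\<in>space M. same_pattern (\<lambda>n. Y n \<omega>) u v s}
    \<le> (1 - \<delta>) powr (real s ^ CARD('d) / 2)"
proof -
  obtain J where J: "J \<subseteq> box (\<lambda>_. 0) s"
    "\<And>j j'. j \<in> J \<Longrightarrow> j' \<in> J \<Longrightarrow> (\<lambda>i. u i + j i) \<noteq> (\<lambda>i. v i + j' i)"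
    "real s ^ CARD('d) \<le> 2 * real (card J)"
    using disjoint_translates_subset[OF uv] by blast
  have fin: "finite J" using J(1) finite_box by (rule finite_subset)
  have [measurable]: "Y n \<in> measurable M (count_space UNIV)" for n
    using Y unfolding indep_vars_def by auto
  have "{\<omega>\<in>space M. same_pattern (\<lambda>n. Y n \<omega>) u v s} \<subseteq>
      {\<omega>\<in>space M. \<forall>j\<in>J. (Y (\<lambda>i. u i + j i) \<omega> \<in> {0}) = (Y (\<lambda>i. v i + j i) \<omega> \<in> {0})}"
    using J(1) by (auto simp: same_pattern_iff_box)
  moreover have "{\<omega>\<in>space M. \<forall>j\<in>J. (Y (\<lambda>i. u i + j i) \<omega> \<in> {0}) = (Y (\<lambda>i. v i + j i) \<omega> \<in> {0})}
      \<in> events"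
    unfolding singleton_iff using fin by measurable
  ultimately have "prob {\<omega>\<in>space M. same_pattern (\<lambda>n. Y n \<omega>) u v s} \<le>
      prob {\<omega>\<in>space M. \<forall>j\<in>J. (Y (\<lambda>i. u i + j i) \<omega> \<in> {0}) = (Y (\<lambda>i. v i + j i) \<omega> \<in> {0})}"
    by (rule finite_measure_mono)
  also have "\<dots> \<le> (1 - \<delta>) ^ card J"
  proof (rule prob_agree_on_pairs_le[OF Y fin])
    show "disjoint_family_on (\<lambda>j. {\<lambda>i. u i + j i, \<lambda>i. v i + j i}) J"
      using J(2) by (auto simp: disjoint_family_on_def fun_eq_iff)
    show "(\<lambda>i. u i + j i) \<noteq> (\<lambda>i. v i + j i)" if "j \<in> J" for j
      using J(2) that by blast
  qed (use \<delta> p J(1) in auto)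
  also have "\<dots> = (1 - \<delta>) powr real (card J)"
    using \<delta> by (simp add: powr_realpow)
  also have "\<dots> \<le> (1 - \<delta>) powr (real s ^ CARD('d) / 2)"
    using J(3) \<delta> by (intro powr_mono') auto
  finally show ?thesis .
qed

lemma (in prob_space) prob_pattern_repeats_le:
  fixes Y :: "('d::finite \<Rightarrow> int) \<Rightarrow> 'a \<Rightarrow> nat"
  assumes Y: "indep_vars (\<lambda>_. count_space UNIV) Y UNIV"
    and \<delta>: "0 \<le> \<delta>" "\<delta> < 1"
    and p: "\<And>w j. w \<in> box (\<lambda>_. 1) L \<Longrightarrow> j \<in> box (\<lambda>_. 0) s \<Longrightarrow>
      \<delta> \<le> prob {\<omega>\<in>space M. Y (\<lambda>i. w i + j i) \<omega> = 0} \<and>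
      prob {\<omega>\<in>space M. Y (\<lambda>i. w i + j i) \<omega> = 0} \<le> 1 - \<delta>"
  shows "prob {\<omega>\<in>space M. pattern_repeats L s (\<lambda>n. Y n \<omega>)}
    \<le> real L ^ (2 * CARD('d)) * (1 - \<delta>) powr (real s ^ CARD('d) / 2)"
proof -
  define B :: "('d \<Rightarrow> int) set" where "B = box (\<lambda>_. 1) L"
  define P where "P = {(u, v) \<in> B \<times> B. u \<noteq> v}"
  define E where "E = (\<lambda>(u, v). {\<omega>\<in>space M. same_pattern (\<lambda>n. Y n \<omega>) u v s})"
  have finP: "finite P"
    by (rule finite_subset[of _ "B \<times> B"]) (auto simp: P_def B_def finite_box)
  have [measurable]: "Y n \<in> measurable M (count_space UNIV)" for n
    using Y unfolding indep_vars_def by auto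
  have E: "E uv \<in> events" for uv
    unfolding E_def same_pattern_iff_box using finite_box by (cases uv) (simp, measurable)
  have "{\<omega>\<in>space M. pattern_repeats L s (\<lambda>n. Y n \<omega>)} = (\<Union>uv\<in>P. E uv)"
    unfolding pattern_repeats_def P_def E_def B_def by auto
  then have "prob {\<omega>\<in>space M. pattern_repeats L s (\<lambda>n. Y n \<omega>)} \<le> (\<Sum>uv\<in>P. prob (E uv))"
    using finP E by (simp add: measure_UNION_le)
  also have "\<dots> \<le> (\<Sum>uv\<in>P. (1 - \<delta>) powr (real s ^ CARD('d) / 2))"
    unfolding E_def P_def B_def
    by (intro sum_mono) (auto intro!: prob_same_pattern_le[OF Y _ \<delta>] p)
  also have "\<dots> \<le> real (card (B \<times> B)) * (1 - \<delta>) powr (real s ^ CARD('d) / 2)"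
  proof -
    have "card P \<le> card (B \<times> B)"
      by (rule card_mono) (auto simp: P_def B_def finite_box)
    then show ?thesis by (simp add: mult_right_mono)
  qed
  also have "\<dots> = real L ^ (2 * CARD('d)) * (1 - \<delta>) powr (real s ^ CARD('d) / 2)"
    unfolding B_def by (simp add: card_cartesian_product card_box power_mult_distrib mult_2 power_add)
  finally show ?thesis .
qed

lemma (in prob_space) AE_eventually_not_pattern_repeats:
  fixes K :: "nat \<Rightarrow> ('d::finite \<Rightarrow> int) \<Rightarrow> 'a \<Rightarrow> nat" and s :: "nat \<Rightarrow> nat"
  assumes \<delta>: "0 \<le> \<delta>" "\<delta> < 1"
    and ev: "eventually (\<lambda>L. indep_vars (\<lambda>_. count_space UNIV) (K L) UNIV \<and>
      (\<forall>w\<in>box (\<lambda>_. 1) L. \<forall>j\<in>box (\<lambda>_. 0) (s L).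
        \<delta> \<le> prob {\<omega>\<in>space M. K L (\<lambda>i. w i + j i) \<omega> = 0} \<and>
        prob {\<omega>\<in>space M. K L (\<lambda>i. w i + j i) \<omega> = 0} \<le> 1 - \<delta>)) sequentially"
      (is "eventually ?good sequentially")
    and sum: "summable (\<lambda>L. real L ^ (2 * CARD('d)) * (1 - \<delta>) powr (real (s L) ^ CARD('d) / 2))"
  shows "AE \<omega> in M. eventually (\<lambda>L. \<not> pattern_repeats L (s L) (\<lambda>n. K L n \<omega>)) sequentially"
proof -
  obtain L0 where L0: "\<And>L. L0 \<le> L \<Longrightarrow> ?good L"
    using ev unfolding eventually_sequentially by blast
  define A where "A L = (if L0 \<le> L then {\<omega>\<in>space M. pattern_repeats L (s L) (\<lambda>n. K L n \<omega>)} else {})"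
    for L
  have A: "A L \<in> events" for L
    using L0[of L] pattern_repeats_event[of "K L"] unfolding A_def indep_vars_def by auto
  have "summable (\<lambda>L. prob (A L))"
  proof (rule summable_comparison_test'[OF sum])
    show "norm (prob (A L)) \<le> real L ^ (2 * CARD('d)) * (1 - \<delta>) powr (real (s L) ^ CARD('d) / 2)"
      if "L0 \<le> L" for L
      using L0[OF that] prob_pattern_repeats_le[OF _ \<delta>, of "K L" L "s L"] that
      by (simp add: A_def)
  qed
  then have "AE \<omega> in M. eventually (\<lambda>L. \<omega> \<in> space M - A L) sequentially"
    using A by (intro borel_cantelli_AE1) (simp_all add: less_top[symmetric])
  then show ?thesis
  proof (rule eventually_mono)
    fix \<omega> assume "eventually (\<lambda>L. \<omega> \<in> space M - A L) sequentially"
    then show "eventually (\<lambda>L. \<not> pattern_repeats L (s L) (\<lambda>n. K L n \<omega>)) sequentially"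
      using eventually_ge_at_top[of L0] by eventually_elim (simp add: A_def)
  qed
qed

definition log_scale :: "real \<Rightarrow> nat \<Rightarrow> nat \<Rightarrow> nat" where
  "log_scale C d L = nat \<lceil>C * ln (real L) powr (1 / real d)\<rceil>"

lemma log_scale_pow_ge:
  assumes "1 \<le> d" "1 \<le> C" "1 \<le> ln (real L)"
  shows "C * ln (real L) \<le> real (log_scale C d L) ^ d"
proof -
  define r where "r = ln (real L) powr (1 / real d)"
  have "r ^ d = ln (real L)"
    unfolding r_def using assms by (simp add: powr_power)
  have "C * ln (real L) \<le> C ^ d * ln (real L)"
    using assms by (intro mult_right_mono) (auto simp: power_increasing[of 1 d C, simplified])
  also have "\<dots> = (C * r) ^ d"
    using \<open>r ^ d = ln (real L)\<close> by (simp add: power_mult_distrib)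
  also have "\<dots> \<le> real (log_scale C d L) ^ d"
    unfolding log_scale_def r_def using assms by (intro power_mono) auto
  finally show ?thesis .
qed

lemma log_scale_eventually:
  assumes "1 \<le> d" "1 \<le> C"
  shows "eventually (\<lambda>L. 1 \<le> log_scale C d L \<and> log_scale C d L \<le> L \<and>
    real (log_scale C d L) \<le> (C + 1) * ln (real L) powr (1 / real d)) sequentially"
proof -
  have "eventually (\<lambda>L. 1 \<le> ln (real L)) sequentially"
    "eventually (\<lambda>L. C * ln (real L) + 1 \<le> real L) sequentially"
    by real_asymp+
  then show ?thesis
  proof eventually_elim
    case (elim L)
    define r where "r = ln (real L) powr (1 / real d)"
    have "ln (real L) powr (1 / real d) \<le> ln (real L) powr 1"
      using elim assms by (intro powr_mono) auto
    then have r: "1 \<le> r" "r \<le> ln (real L)"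
      unfolding r_def using elim by (auto intro: ge_one_powr_ge_zero)
    have Cr: "1 \<le> C * r" "C * r \<le> C * ln (real L)"
      using r assms mult_mono[of 1 C 1 r] by (auto intro: mult_left_mono)
    then have "C * r \<le> real (log_scale C d L)" "real (log_scale C d L) \<le> C * r + 1"
      unfolding log_scale_def r_def[symmetric] using of_int_ceiling_le_add_one[of "C * r"] by linarith+
    with Cr show ?case using r elim by (simp add: r_def[symmetric] algebra_simps)
  qed
qed

lemma log_scale_summable:
  fixes \<rho> :: real
  assumes \<rho>: "0 < \<rho>" "\<rho> < 1" and d: "1 \<le> d"
  obtains C where "1 \<le> C"
    and "summable (\<lambda>L. real L ^ (2 * d) * \<rho> powr (real (log_scale C d L) ^ d / 2))"
proof
  define \<kappa> where "\<kappa> = - ln \<rho>"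
  have \<kappa>: "0 < \<kappa>" using \<rho> by (simp add: \<kappa>_def)
  (* Chosen so that the summand is at most L^(-2) once ln L \<ge> 1. *)
  define C where "C = max 1 ((4 * real d + 4) / \<kappa>)"
  show C: "1 \<le> C" by (simp add: C_def)
  have "\<kappa> * C \<ge> 4 * real d + 4"
    using \<kappa> by (simp add: C_def max_def field_simps split: if_splits)
  have "eventually (\<lambda>L. 1 \<le> ln (real L)) sequentially" by real_asymp
  then have "eventually (\<lambda>L. norm (real L ^ (2 * d) * \<rho> powr (real (log_scale C d L) ^ d / 2))
      \<le> real L powr (-2)) sequentially"
  proof eventually_elim
    case (elim L)
    have L: "0 < real L" using elim by (cases "L = 0") auto
    have "\<rho> powr (real (log_scale C d L) ^ d / 2) \<le> \<rho> powr (C * ln (real L) / 2)"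
      using log_scale_pow_ge[OF d C elim] \<rho> by (intro powr_mono') auto
    also have "\<dots> = exp (- (\<kappa> * C) * ln (real L) / 2)"
      using \<rho> by (simp add: powr_def \<kappa>_def)
    also have "\<dots> \<le> exp (- (2 * real d + 2) * ln (real L))"
      using mult_right_mono[OF \<open>\<kappa> * C \<ge> 4 * real d + 4\<close>, of "ln (real L)"] elim
      by (simp add: algebra_simps)
    also have "\<dots> = real L powr (- (2 * real d + 2))"
      using L by (simp add: powr_def)
    finally have "real L ^ (2 * d) * \<rho> powr (real (log_scale C d L) ^ d / 2)
        \<le> real L powr (2 * real d) * real L powr (- (2 * real d + 2))"
      using powr_realpow[OF L, of "2 * d"] by (simp add: mult_left_mono)
    also have "\<dots> = real L powr (-2)"
      by (simp add: powr_add[symmetric])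
    finally show ?case by simp
  qed
  then show "summable (\<lambda>L. real L ^ (2 * d) * \<rho> powr (real (log_scale C d L) ^ d / 2))"
    by (rule summable_comparison_test_ev) (simp add: summable_real_powr_iff)
qed

lemma limsup_Rdist_le:
  fixes k :: "nat \<Rightarrow> ('d::finite \<Rightarrow> int) \<Rightarrow> nat"
  assumes "eventually (\<lambda>L. \<not> pattern_repeats L (s L) (k L)) sequentially"
    and "eventually (\<lambda>L. 1 \<le> s L \<and> real (s L) \<le> c * ln (real L) powr (1 / real CARD('d))) sequentially"
  shows "limsup (\<lambda>L. Max ((\<lambda>u. Rdist L u (k L) / ereal (ln (real L) powr (1 / real CARD('d))))
    ` box (\<lambda>_. 1) L)) \<le> ereal c"
proof (rule Limsup_bounded)
  show "eventually (\<lambda>L. Max ((\<lambda>u. Rdist L u (k L) / ereal (ln (real L) powr (1 / real CARD('d))))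
    ` box (\<lambda>_. 1) L) \<le> ereal c) sequentially"
    using assms eventually_ge_at_top[of 1]
  proof eventually_elim
    case (elim L)
    define r where "r = ln (real L) powr (1 / real CARD('d))"
    have "0 \<le> r" "r \<noteq> 0"
      using elim by (auto simp: r_def)
    then have "0 < r" by simp
    have "Rdist L u (k L) / ereal r \<le> ereal c" if "u \<in> box (\<lambda>_. 1) L" for u
    proof -
      have "Rdist L u (k L) \<le> ereal (real (s L))"
        using Rdist_le_if_not_pattern_repeats[OF _ _ that] elim by blast
      then have "Rdist L u (k L) / ereal r \<le> ereal (real (s L)) / ereal r"
        using \<open>0 < r\<close> by (intro ereal_divide_right_mono) auto
      also have "\<dots> \<le> ereal c"
        using elim \<open>0 < r\<close> by (simp add: r_def[symmetric] divide_le_eq)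
      finally show ?thesis .
    qed
    moreover have "(\<lambda>_. 1) \<in> box (\<lambda>_. 1) L"
      using elim by (simp add: box_def)
    ultimately show ?case
      using finite_box by (subst Max_le_iff) (auto simp: r_def)
  qed
qed

(* P(K = 0) for the geometric law (bosons) resp. the Bernoulli law (fermions) with parameter q. *)
definition vacancy_prob :: "bool \<Rightarrow> real \<Rightarrow> real" where
  "vacancy_prob boson q = (if boson then 1 - q else 1 / (1 + q))"

lemma vacancy_prob_antimono:
  assumes "0 \<le> q" "q \<le> q'"
  shows "vacancy_prob boson q' \<le> vacancy_prob boson q"
  using assms by (simp add: vacancy_prob_def frac_le)

lemma lnorm_nonneg: "0 \<le> lnorm n"
  unfolding lnorm_def by (simp add: sum_nonneg)

lemma qL_vacancy_prob_bounded:
  assumes \<beta>: "\<beta> > 0" and \<theta>: "continuous_on {0..} \<theta>" "\<forall>x\<ge>0. \<theta> x \<ge> 0"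
    and \<mu>: "boson \<Longrightarrow> \<mu> > 0" and T: "0 \<le> T"
  obtains \<delta> where "0 < \<delta>" "\<delta> < 1"
    and "\<And>L n. lnorm n \<le> T * real L \<Longrightarrow>
      \<delta> \<le> vacancy_prob boson (qL \<beta> \<theta> \<mu> L n) \<and> vacancy_prob boson (qL \<beta> \<theta> \<mu> L n) \<le> 1 - \<delta>"
proof -
  obtain x0 where "x0 \<in> {0..T}" "\<forall>x\<in>{0..T}. \<theta> x \<le> \<theta> x0"
    using continuous_attains_sup[of "{0..T}" \<theta>] continuous_on_subset[OF \<theta>(1)] T by auto
  define qlo where "qlo = exp (- \<beta> * (\<theta> x0 + \<mu>))"
  define qhi where "qhi = exp (- \<beta> * \<mu>)"
  have q: "qlo \<le> qL \<beta> \<theta> \<mu> L n \<and> qL \<beta> \<theta> \<mu> L n \<le> qhi" if "lnorm n \<le> T * real L" for L n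
  proof -
    define x where "x = lnorm n / real L"
    have "0 \<le> x" "x \<le> T"
      unfolding x_def
      by (cases "L = 0") (use that T lnorm_nonneg[of n] in \<open>auto simp: divide_le_eq\<close>)
    then have "0 \<le> \<theta> x" "\<theta> x \<le> \<theta> x0"
      using \<theta>(2) \<open>\<forall>x\<in>{0..T}. \<theta> x \<le> \<theta> x0\<close> by auto
    then show ?thesis
      unfolding qL_def qlo_def qhi_def x_def[symmetric] using \<beta> by (simp add: mult_left_mono)
  qed
  have qlo: "0 < qlo" "qlo \<le> qhi"
    using \<beta> \<theta>(2) \<open>x0 \<in> {0..T}\<close> by (simp_all add: qlo_def qhi_def)
  have hi: "0 < vacancy_prob boson qhi"
  proof (cases boson)
    case True
    then show ?thesis using \<beta> \<mu> by (simp add: vacancy_prob_def qhi_def)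
  qed (simp add: vacancy_prob_def qhi_def add_pos_nonneg)
  have lo: "vacancy_prob boson qlo < 1"
    using qlo by (simp add: vacancy_prob_def)
  define \<delta> where "\<delta> = min (vacancy_prob boson qhi) (1 - vacancy_prob boson qlo)"
  show thesis
  proof
    show "0 < \<delta>" using hi lo by (simp add: \<delta>_def)
    show "\<delta> < 1" using hi vacancy_prob_antimono[of qlo qhi boson] qlo by (simp add: \<delta>_def)
    show "\<delta> \<le> vacancy_prob boson (qL \<beta> \<theta> \<mu> L n) \<and> vacancy_prob boson (qL \<beta> \<theta> \<mu> L n) \<le> 1 - \<delta>"
      if "lnorm n \<le> T * real L" for L n
      using q[OF that] qlo vacancy_prob_antimono[of qlo "qL \<beta> \<theta> \<mu> L n" boson]
        vacancy_prob_antimono[of "qL \<beta> \<theta> \<mu> L n" qhi boson]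
      by (auto simp: \<delta>_def min_def)
  qed
qed

lemma lnorm_le:
  fixes n :: "'d::finite \<Rightarrow> int"
  assumes "\<And>i. \<bar>n i\<bar> \<le> B"
  shows "lnorm n \<le> sqrt (real CARD('d)) * B"
proof -
  have "(\<Sum>i\<in>UNIV. (real_of_int (n i))\<^sup>2) \<le> (\<Sum>i\<in>(UNIV::'d set). (real_of_int B)\<^sup>2)"
  proof (rule sum_mono)
    fix i
    have "\<bar>real_of_int (n i)\<bar> \<le> \<bar>real_of_int B\<bar>" using assms[of i] by linarith
    then show "(real_of_int (n i))\<^sup>2 \<le> (real_of_int B)\<^sup>2" by (simp only: abs_le_square_iff)
  qed
  then have "lnorm n \<le> sqrt (real CARD('d) * (real_of_int B)\<^sup>2)"
    unfolding lnorm_def by simp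
  also have "\<dots> = sqrt (real CARD('d)) * B"
    using assms[of undefined] by (simp add: real_sqrt_mult)
  finally show ?thesis .
qed

lemma lnorm_translate_le:
  fixes w j :: "'d::finite \<Rightarrow> int"
  assumes "w \<in> box (\<lambda>_. 1) L" "j \<in> box (\<lambda>_. 0) s" "s \<le> L"
  shows "lnorm (\<lambda>i. w i + j i) \<le> 2 * sqrt (real CARD('d)) * real L"
proof -
  have "\<bar>w i + j i\<bar> \<le> 2 * int L" for i
  proof -
    have "1 \<le> w i" "w i \<le> int L" "0 \<le> j i" "j i \<le> int s - 1"
      using assms(1,2) by (auto simp: box_def)
    then show ?thesis using assms(3) by linarith
  qed
  then show ?thesis using lnorm_le[of "\<lambda>i. w i + j i" "2 * int L"] by (simp add: ac_simps)
qed

theorem lemma3: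
  fixes M :: "'a measure"
    and K :: "nat \<Rightarrow> ('d::finite \<Rightarrow> int) \<Rightarrow> 'a \<Rightarrow> nat"
    and \<theta> :: "real \<Rightarrow> real" and \<beta> \<mu> :: real and boson :: bool
  assumes "prob_space M"
    and "\<beta> > 0"
    and "continuous_on {0..} \<theta>"
    and "\<forall>x\<ge>0. \<theta> x \<ge> 0"
    and "\<forall>x>0. \<theta> x > 0"
    and "integrable lborel (hint boson \<beta> \<theta> \<mu> :: real^'d \<Rightarrow> real)"
    and "boson \<Longrightarrow> \<mu> > 0"
    and "prob_space.indep_vars M (\<lambda>_. count_space UNIV) (\<lambda>(L, n). K L n) ({1..} \<times> UNIV)"
    and "boson \<Longrightarrow> \<forall>L\<ge>1. \<forall>n k. measure M {\<omega>\<in>space M. K L n \<omega> = k}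
                       = (1 - qL \<beta> \<theta> \<mu> L n) * (qL \<beta> \<theta> \<mu> L n) ^ k"
    and "\<not> boson \<Longrightarrow> \<forall>L\<ge>1. \<forall>n.
            measure M {\<omega>\<in>space M. K L n \<omega> = 1} = qL \<beta> \<theta> \<mu> L n / (1 + qL \<beta> \<theta> \<mu> L n) \<and>
            measure M {\<omega>\<in>space M. K L n \<omega> = 0} = 1 / (1 + qL \<beta> \<theta> \<mu> L n)"
  shows "\<exists>c::real. AE \<omega> in M.
           limsup (\<lambda>L::nat. Max ((\<lambda>u. Rdist L u (\<lambda>n. K L n \<omega>)
                     / ereal (ln (real L) powr (1 / real CARD('d)))) ` box (\<lambda>_. 1) L))
           \<le> ereal c"
proof -
  interpret prob_space M by fact
  have vacancy: "prob {\<omega>\<in>space M. K L n \<omega> = 0} = vacancy_prob boson (qL \<beta> \<theta> \<mu> L n)"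
    if "1 \<le> L" for L n
    using assms(9,10) that by (cases boson) (auto simp: vacancy_prob_def)
  have indep: "indep_vars (\<lambda>_. count_space UNIV) (K L) UNIV" if "1 \<le> L" for L
    using indep_vars_reindex[OF assms(8), of "Pair L" UNIV] that by (auto simp: inj_on_def)
  obtain \<delta> where \<delta>: "0 < \<delta>" "\<delta> < 1" and vacancy_bounded: "\<And>L (n :: 'd \<Rightarrow> int).
      lnorm n \<le> 2 * sqrt (real CARD('d)) * real L \<Longrightarrow>
      \<delta> \<le> vacancy_prob boson (qL \<beta> \<theta> \<mu> L n) \<and> vacancy_prob boson (qL \<beta> \<theta> \<mu> L n) \<le> 1 - \<delta>"
    using qL_vacancy_prob_bounded[OF assms(2-4,7), where T = "2 * sqrt (real CARD('d))"] by auto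
  obtain C where C: "1 \<le> C" and summable: "summable (\<lambda>L. real L ^ (2 * CARD('d)) *
      (1 - \<delta>) powr (real (log_scale C CARD('d) L) ^ CARD('d) / 2))"
    using log_scale_summable[of "1 - \<delta>" "CARD('d)"] \<delta> by auto
  define s where "s = log_scale C CARD('d)"
  have scale: "eventually (\<lambda>L. 1 \<le> s L \<and> s L \<le> L \<and>
      real (s L) \<le> (C + 1) * ln (real L) powr (1 / real CARD('d))) sequentially"
    unfolding s_def using C by (intro log_scale_eventually) auto
  have "eventually (\<lambda>L. indep_vars (\<lambda>_. count_space UNIV) (K L) UNIV \<and>
      (\<forall>w\<in>box (\<lambda>_. 1) L. \<forall>j\<in>box (\<lambda>_. 0) (s L).
        \<delta> \<le> prob {\<omega>\<in>space M. K L (\<lambda>i. w i + j i) \<omega> = 0} \<and>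
        prob {\<omega>\<in>space M. K L (\<lambda>i. w i + j i) \<omega> = 0} \<le> 1 - \<delta>)) sequentially"
    using scale eventually_ge_at_top[of 1]
    by eventually_elim (simp add: indep vacancy vacancy_bounded[OF lnorm_translate_le])
  then have "AE \<omega> in M. eventually (\<lambda>L. \<not> pattern_repeats L (s L) (\<lambda>n. K L n \<omega>)) sequentially"
    using \<delta> summable unfolding s_def by (intro AE_eventually_not_pattern_repeats) auto
  moreover have "eventually (\<lambda>L. 1 \<le> s L \<and>
      real (s L) \<le> (C + 1) * ln (real L) powr (1 / real CARD('d))) sequentially"
    using scale by (rule eventually_mono) auto
  ultimately show ?thesis
    by (intro exI[of _ "C + 1"]) (erule eventually_mono, erule limsup_Rdist_le)
qed

end
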